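(* Let $K$ and $K'$ be two non-degenerate CMIs, with $\mathrm{can}(\mathrm{pur}(K))=(C,\langle\mathbb I_K,\mathbb I_K,P_i,1\le i\le t\rangle)$. Let $K''=R_K^{K'}$ and $\mathrm{can}(\mathrm{pur}(K''))=(C'',\langle\mathbb I_{K''},\mathbb I_{K''},P''_j,1\le j\le r\rangle)$, and let $P=\bigcup_{i=1}^tP_i$, $P''=\bigcup_{j=1}^rP''_j$. If $K$ implies $K'$ and $R_K^{K'}\ne(\cdot,\langle\ \rangle)$, then $P''\subseteq P$.
   Context: Setting: $X_1,\dots,X_n$ jointly distributed discrete random variables with $H(X_i)<\infty$; distribution unspecified. $X_\alpha=(X_i,i\in\alpha)$, $X_\emptyset$ constant. A CMI is $K=(C,\langle Q_1,\dots,Q_k\rangle)$, $k\ge0$, $C\subseteq\{1,\dots,n\}$, $\langle\cdot\rangle$ an unordered multiset of subsets; valid (for a given distribution) if $\sum_iH(X_{Q_i}|X_C)-H(X_{Q_1},\dots,X_{Q_k}|X_C)=0$. Empty members may be deleted. Degenerate = valid for every distribution, written $(\cdot,\langle\ \rangle)$. "$K$ implies $K'$": for every joint distribution, if $K$ is valid then $K'$ is valid. $\mathrm{pur}(K)=(C,\langle Q_i\setminus C:Q_i\setminus C\ne\emptyset\rangle)$. For pure $K$: $\mathbb I_K$ = indices lying in at least two members of the collection if $k\ge2$, else $\emptyset$; $P_1,\dots,P_t$ the nonempty sets among $Q_i\setminus\mathbb I_K$; $\mathrm{can}(K)=(\cdot,\langle\ \rangle)$ if $k\le1$, $(C,\langle\mathbb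 I_K,\mathbb I_K\rangle)$ if $k\ge2,\mathbb I_K\ne\emptyset,t\le1$, $(C,\langle P_1..P_t\rangle)$ if $k\ge2,\mathbb I_K=\emptyset$, $(C,\langle\mathbb I_K,\mathbb I_K,P_1..P_t\rangle)$ if $k\ge2,\mathbb I_K\ne\emptyset,t\ge2$. For general $K$, $\mathbb I_K$ is the repeated-index set of $\mathrm{pur}(K)$; general-form notation omits the copies of $\mathbb I_K$ when empty and uses $t=0$ for $(C,\langle\mathbb I_K,\mathbb I_K\rangle)$. $R_K^{K'}$ ("$K'$ conditioning on $K$"): with $\mathrm{can}(\mathrm{pur}(K'))=(C',\langle\mathbb I_{K'},\mathbb I_{K'},P'_j,1\le j\le s\rangle)$, $D=\mathbb I_{K'}\setminus\mathbb I_K$ and $T_1,\dots,T_u$ the nonempty sets among $P'_j\setminus\mathbb I_K$: $R_K^{K'}=(\cdot,\langle\ \rangle)$ if $D=\emptyset,u\le1$; $(C'\setminus\mathbb I_K,\langle T_1..T_u\rangle)$ if $D=\emptyset,u\ge2$; $(C'\setminus\mathbb I_K,\langle D,D\rangle)$ if $D\ne\emptyset,u\le1$; $(C'\setminus\mathbb I_K,\langle D,D,T_1..T_u\rangle)$ if $D\ne\emptyset,u\ge2$. *)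

theory Defs
  imports "HOL-Probability.Probability_Mass_Function" "HOL-Library.Multiset"
begin

text \<open>A joint distribution of the discrete random variables X_1..X_n is modelled as a pmf on
  value vectors (nat \<Rightarrow> nat); coordinate i is the value of X_i (countable alphabets
  relabelled into nat). Coordinates outside {1..n} are irrelevant.\<close>

type_synonym cmi = "nat set \<times> nat set multiset"

definition marg :: "(nat \<Rightarrow> nat) pmf \<Rightarrow> nat set \<Rightarrow> (nat \<Rightarrow> nat) pmf" where
  "marg p A = map_pmf (\<lambda>x i. if i \<in> A then x i else 0) p"

definition ent_terms :: "(nat \<Rightarrow> nat) pmf \<Rightarrow> nat set \<Rightarrow> (nat \<Rightarrow> nat) \<Rightarrow> real" where
  "ent_terms p A = (\<lambda>v. - pmf (marg p A) v * ln (pmf (marg p A) v))"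

text \<open>Shannon entropy H(X_A) (natural log; base is irrelevant for validity).\<close>
definition ent :: "(nat \<Rightarrow> nat) pmf \<Rightarrow> nat set \<Rightarrow> real" where
  "ent p A = infsum (ent_terms p A) UNIV"

definition cent :: "(nat \<Rightarrow> nat) pmf \<Rightarrow> nat set \<Rightarrow> nat set \<Rightarrow> real" where
  "cent p A C = ent p (A \<union> C) - ent p C"

text \<open>Admissible distributions: H(X_i) < \<infinity> for all i in {1..n}.\<close>
definition admissible :: "nat \<Rightarrow> (nat \<Rightarrow> nat) pmf \<Rightarrow> bool" where
  "admissible n p \<longleftrightarrow> (\<forall>i\<in>{1..n}. ent_terms p {i} summable_on UNIV)"

definition wf_cmi :: "nat \<Rightarrow> cmi \<Rightarrow> bool" where
  "wf_cmi n K \<longleftrightarrow> fst K \<subseteq> {1..n} \<and> (\<forall>Q\<in>#snd K. Q \<subseteq> {1..n})"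

definition valid :: "(nat \<Rightarrow> nat) pmf \<Rightarrow> cmi \<Rightarrow> bool" where
  "valid p K \<longleftrightarrow>
     (\<Sum>Q\<in>#snd K. cent p Q (fst K)) - cent p (\<Union>(set_mset (snd K))) (fst K) = 0"

definition degenerate :: "nat \<Rightarrow> cmi \<Rightarrow> bool" where
  "degenerate n K \<longleftrightarrow> (\<forall>p. admissible n p \<longrightarrow> valid p K)"

definition implies :: "nat \<Rightarrow> cmi \<Rightarrow> cmi \<Rightarrow> bool" where
  "implies n K K' \<longleftrightarrow> (\<forall>p. admissible n p \<longrightarrow> valid p K \<longrightarrow> valid p K')"

text \<open>The degenerate CMI symbol (\<cdot>, \<langle> \<rangle>), represented as the CMI with empty collection.\<close>
definition deg_cmi :: cmi where
  "deg_cmi = ({}, {#})"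

definition pur :: "cmi \<Rightarrow> cmi" where
  "pur K = (fst K, image_mset (\<lambda>Q. Q - fst K) (filter_mset (\<lambda>Q. Q - fst K \<noteq> {}) (snd K)))"

definition rep_pure :: "cmi \<Rightarrow> nat set" where
  "rep_pure K = (if size (snd K) \<ge> 2
      then {i. size (filter_mset (\<lambda>Q. i \<in> Q) (snd K)) \<ge> 2} else {})"

definition rep :: "cmi \<Rightarrow> nat set" where
  "rep K = rep_pure (pur K)"

definition Psets :: "cmi \<Rightarrow> nat set multiset" where
  "Psets K = filter_mset (\<lambda>S. S \<noteq> {}) (image_mset (\<lambda>Q. Q - rep_pure K) (snd K))"

definition can :: "cmi \<Rightarrow> cmi" where
  "can K = (let I = rep_pure K; P = Psets K in
     if size (snd K) \<le> 1 then deg_cmi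
     else if I \<noteq> {} \<and> size P \<le> 1 then (fst K, {#I, I#})
     else if I = {} then (fst K, P)
     else (fst K, {#I, I#} + P))"

text \<open>The P-members of can(pur K) in the general-form notation
  (C, \<langle>I_K, I_K, P_i, 1 \<le> i \<le> t\<rangle>): t = 0 when can(pur K) is (C,\<langle>I_K,I_K\<rangle>)
  or degenerate.\<close>
definition canP :: "cmi \<Rightarrow> nat set multiset" where
  "canP K = (let K0 = pur K; I = rep_pure K0 in
     snd (can K0) - (if I \<noteq> {} then {#I, I#} else {#}))"

definition condR :: "cmi \<Rightarrow> cmi \<Rightarrow> cmi" where
  "condR K K' = (let D = rep K' - rep K;
        T = filter_mset (\<lambda>S. S \<noteq> {}) (image_mset (\<lambda>S. S - rep K) (canP K'));
        C = fst (can (pur K')) - rep K in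
     if D = {} \<and> size T \<le> 1 then deg_cmi
     else if D = {} then (C, T)
     else if size T \<le> 1 then (C, {#D, D#})
     else (C, {#D, D#} + T))"

end

theory Submission
  imports Defs
begin

text \<open>For a set S of indices let all X_i with i \<in> S be one common fair bit and all other X_i
  constant. Under this distribution H(X_A | X_C) is ln 2 if A meets S and C does not, and 0
  otherwise, so a CMI is valid iff its conditioning set meets S or at most one of its members
  meets S.

  If x \<in> P'' but x \<notin> P, then x lies in exactly one of the sets T_j, and since there are at
  least two of them another T_j contains some y. Both x and y lie in P' and outside I_K, so for
  S = {x, y} two members of K' meet S while C' does not: K' fails. K holds: if two of its members
  met S outside C, then S would avoid I_K, the P_i would number at least two and form can(pur K),
  but x lies in no P_i and y in at most one member.\<close>

lemma entropy_terms_pmf_of_set_has_sum: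
  assumes "finite F" "F \<noteq> {}"
  shows "((\<lambda>v. - pmf (pmf_of_set F) v * ln (pmf (pmf_of_set F) v)) has_sum ln (card F)) UNIV"
proof -
  have "((\<lambda>v. - pmf (pmf_of_set F) v * ln (pmf (pmf_of_set F) v)) has_sum ln (card F)) F"
  proof (rule has_sum_finiteI)
    have "(\<Sum>v\<in>F. - pmf (pmf_of_set F) v * ln (pmf (pmf_of_set F) v))
        = (\<Sum>v\<in>F. - (1 / card F) * ln (1 / card F))"
      using assms by (intro sum.cong) auto
    then show "ln (card F) = (\<Sum>v\<in>F. - pmf (pmf_of_set F) v * ln (pmf (pmf_of_set F) v))"
      using assms by (simp add: ln_div)
  qed (use assms in simp)
  then show ?thesis
    by (rule has_sum_cong_neutral[THEN iffD1, rotated -1]) (use assms in auto)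
qed

lemma indicator_empty: "indicator {} = (\<lambda>_. 0)"
  by (simp add: fun_eq_iff)

definition shared_bit :: "nat set \<Rightarrow> (nat \<Rightarrow> nat) pmf" where
  "shared_bit S = pmf_of_set {\<lambda>_. 0, indicator S}"

lemma marg_shared_bit: "marg (shared_bit S) A = shared_bit (A \<inter> S)"
proof (cases "A \<inter> S = {}")
  case True
  have "marg (shared_bit S) A = map_pmf (\<lambda>_. \<lambda>_. 0) (shared_bit S)"
    unfolding marg_def shared_bit_def
    by (rule map_pmf_cong) (use True in \<open>auto simp: indicator_def fun_eq_iff\<close>)
  then show ?thesis
    using True by (simp add: shared_bit_def indicator_empty pmf_of_set_singleton)
next
  case False
  let ?proj = "\<lambda>x i. if i \<in> A then x i else 0"
  have "inj_on ?proj {\<lambda>_. 0, indicator S}"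
    using False by (auto simp: inj_on_def indicator_def fun_eq_iff)
  then have "marg (shared_bit S) A = pmf_of_set (?proj ` {\<lambda>_. 0, indicator S})"
    unfolding marg_def shared_bit_def by (intro map_pmf_of_set_inj) auto
  also have "?proj ` {\<lambda>_. 0, indicator S} = {\<lambda>_. 0, indicator (A \<inter> S)}"
    by (auto simp: indicator_def fun_eq_iff)
  finally show ?thesis
    unfolding shared_bit_def .
qed

lemma card_zero_indicator: "card {\<lambda>_. 0 :: nat, indicator T} = (if T = {} then 1 else 2)"
  by (auto simp: indicator_empty indicator_def fun_eq_iff)

lemma ent_terms_shared_bit_has_sum:
  "(ent_terms (shared_bit S) A has_sum (if A \<inter> S = {} then 0 else ln 2)) UNIV"
proof -
  have "(ent_terms (shared_bit S) A has_sum ln (card {\<lambda>_. 0 :: nat, indicator (A \<inter> S)})) UNIV"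
    unfolding ent_terms_def marg_shared_bit unfolding shared_bit_def
    by (rule entropy_terms_pmf_of_set_has_sum) auto
  then show ?thesis
    by (simp add: card_zero_indicator split: if_splits)
qed

lemma ent_shared_bit: "ent (shared_bit S) A = (if A \<inter> S = {} then 0 else ln 2)"
  unfolding ent_def by (rule infsumI) (rule ent_terms_shared_bit_has_sum)

lemma admissible_shared_bit: "admissible n (shared_bit S)"
  unfolding admissible_def using ent_terms_shared_bit_has_sum by (blast intro: has_sum_imp_summable)

lemma cent_shared_bit: "cent (shared_bit S) A C = (if C \<inter> S = {} \<and> A \<inter> S \<noteq> {} then ln 2 else 0)"
  unfolding cent_def ent_shared_bit by auto

definition meet_count :: "'a set \<Rightarrow> 'a set multiset \<Rightarrow> nat" where
  "meet_count S M = size (filter_mset (\<lambda>Q. Q \<inter> S \<noteq> {}) M)"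

lemma meet_count_empty [simp]: "meet_count S {#} = 0"
  by (simp add: meet_count_def)

lemma meet_count_add_mset [simp]:
  "meet_count S (add_mset Q M) = (if Q \<inter> S = {} then meet_count S M else Suc (meet_count S M))"
  by (simp add: meet_count_def)

lemma meet_count_union [simp]: "meet_count S (M + N) = meet_count S M + meet_count S N"
  by (simp add: meet_count_def)

lemma meet_count_le_size: "meet_count S M \<le> size M"
  by (simp add: meet_count_def)

lemma meet_count_mono: "S \<subseteq> S' \<Longrightarrow> meet_count S M \<le> meet_count S' M"
  by (induction M) auto

lemma meet_count_insert_le: "meet_count (insert x S) M \<le> meet_count {x} M + meet_count S M"
  by (induction M) auto

lemma meet_count_eq_0_iff: "meet_count S M = 0 \<longleftrightarrow> (\<forall>Q\<in>#M. Q \<inter> S = {})"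
  by (induction M) auto

lemma meet_count_less_size_iff: "meet_count S M < size M \<longleftrightarrow> (\<exists>Q\<in>#M. Q \<inter> S = {})"
  by (induction M) (auto simp: less_Suc_eq_le meet_count_le_size)

lemma Union_Int_nonempty_iff: "\<Union>(set_mset M) \<inter> S \<noteq> {} \<longleftrightarrow> 0 < meet_count S M"
  by (induction M) auto

lemma sum_mset_cent_shared_bit:
  "C \<inter> S = {} \<Longrightarrow> (\<Sum>Q\<in>#M. cent (shared_bit S) Q C) = ln 2 * meet_count S M"
  by (induction M) (auto simp: cent_shared_bit algebra_simps)

lemma valid_shared_bit_iff:
  "valid (shared_bit S) K \<longleftrightarrow> fst K \<inter> S \<noteq> {} \<or> meet_count S (snd K) \<le> 1"
proof (cases "fst K \<inter> S = {}")
  case True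
  then have "valid (shared_bit S) K \<longleftrightarrow>
      ln 2 * meet_count S (snd K) - (if 0 < meet_count S (snd K) then ln 2 else 0) = 0"
    unfolding valid_def sum_mset_cent_shared_bit[OF True] by (simp add: cent_shared_bit Union_Int_nonempty_iff)
  also have "\<dots> \<longleftrightarrow> meet_count S (snd K) \<le> 1"
    by (cases "meet_count S (snd K)") (auto simp: algebra_simps)
  finally show ?thesis
    using True by simp
qed (simp add: valid_def cent_shared_bit)

definition members_minus :: "'a set \<Rightarrow> 'a set multiset \<Rightarrow> 'a set multiset" where
  "members_minus R M = filter_mset (\<lambda>Q. Q \<noteq> {}) (image_mset (\<lambda>Q. Q - R) M)"

lemma meet_count_members_minus: "meet_count S (members_minus R M) = meet_count (S - R) M"
  by (induction M) (auto simp: members_minus_def)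

lemma Union_members_minus: "\<Union>(set_mset (members_minus R M)) = \<Union>(set_mset M) - R"
  by (auto simp: members_minus_def)

lemma snd_pur: "snd (pur L) = members_minus (fst L) (snd L)"
  by (simp add: pur_def members_minus_def filter_mset_image_mset)

lemma Psets_eq_members_minus: "Psets L = members_minus (rep_pure L) (snd L)"
  by (simp add: Psets_def members_minus_def)

lemma notin_rep_pure_iff:
  "2 \<le> size (snd L) \<Longrightarrow> z \<notin> rep_pure L \<longleftrightarrow> meet_count {z} (snd L) \<le> 1"
  by (auto simp: rep_pure_def meet_count_def)

lemma canP_eq:
  "canP L = (if 2 \<le> size (snd (pur L)) \<and> (rep L = {} \<or> 2 \<le> size (Psets (pur L)))
     then Psets (pur L) else {#})"
  by (auto simp: canP_def can_def rep_def deg_cmi_def Let_def)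

lemma Union_canP_subset: "\<Union>(set_mset (canP L)) \<subseteq> \<Union>(set_mset (snd L)) - fst L - rep L"
  by (auto simp: canP_eq Psets_eq_members_minus snd_pur Union_members_minus rep_def)

lemma meet_count_canP_le: "meet_count S (canP L) \<le> meet_count S (snd L)"
proof -
  have "meet_count S (Psets (pur L)) = meet_count (S - rep L - fst L) (snd L)"
    by (simp add: Psets_eq_members_minus snd_pur meet_count_members_minus rep_def)
  also have "\<dots> \<le> meet_count S (snd L)"
    by (rule meet_count_mono) auto
  finally show ?thesis
    by (simp add: canP_eq)
qed

lemma meet_count_canP_member:
  assumes "z \<in> \<Union>(set_mset (canP L))"
  shows "meet_count {z} (snd L) = 1"
proof -
  have size_pur: "2 \<le> size (snd (pur L))" and canP: "canP L = Psets (pur L)"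
    using assms by (auto simp: canP_eq split: if_splits)
  have z: "z \<notin> fst L" "z \<notin> rep L"
    using assms Union_canP_subset by blast+
  then have count: "meet_count {z} (snd L) = meet_count {z} (snd (pur L))"
    by (simp add: snd_pur meet_count_members_minus insert_Diff_if)
  have "0 < meet_count {z} (Psets (pur L))"
    using assms canP by (auto simp: Union_Int_nonempty_iff[symmetric])
  also have "meet_count {z} (Psets (pur L)) = meet_count {z} (snd (pur L))"
    using z by (simp add: Psets_eq_members_minus meet_count_members_minus insert_Diff_if rep_def)
  finally show ?thesis
    using notin_rep_pure_iff[OF size_pur] z count by (simp add: rep_def)
qed

lemma condR_unique_member:
  assumes "condR K K' \<noteq> deg_cmi" "meet_count {x} (snd (condR K K')) = 1"
  shows "2 \<le> size (members_minus (rep K) (canP K'))"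
    and "meet_count {x} (members_minus (rep K) (canP K')) = 1"
  using assms unfolding condR_def Let_def members_minus_def[symmetric]
  by (auto simp: deg_cmi_def split: if_splits)

lemma two_le_meet_count:
  assumes "A \<in># M" "B \<in># M" "A \<noteq> B" "A \<inter> S \<noteq> {}" "B \<inter> S \<noteq> {}"
  shows "2 \<le> meet_count S M"
proof -
  have "{#A, B#} \<subseteq># filter_mset (\<lambda>Q. Q \<inter> S \<noteq> {}) M"
    using assms by (simp add: insert_subset_eq_iff in_diff_count)
  then have "size {#A, B#} \<le> meet_count S M"
    unfolding meet_count_def by (rule size_mset_mono)
  then show ?thesis
    by simp
qed

lemma condR_witness:
  assumes "condR K K' \<noteq> deg_cmi" "x \<in> \<Union>(set_mset (canP (condR K K')))"
  obtains y where "x \<notin> rep K" "y \<notin> rep K" "\<not> valid (shared_bit {x, y}) K'"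
proof -
  define T where "T = members_minus (rep K) (canP K')"
  have size_T: "2 \<le> size T" and count_x: "meet_count {x} T = 1"
    using condR_unique_member[OF assms(1) meet_count_canP_member[OF assms(2)]] by (simp_all add: T_def)
  obtain A where A: "A \<in># T" "x \<in> A"
    using count_x meet_count_eq_0_iff[of "{x}" T] by auto
  obtain B where B: "B \<in># T" "x \<notin> B"
    using size_T count_x meet_count_less_size_iff[of "{x}" T] by auto
  obtain y where y: "y \<in> B"
    using B by (auto simp: T_def members_minus_def)
  have "{x, y} \<subseteq> \<Union>(set_mset T)"
    using A B y by auto
  then have xy: "{x, y} \<subseteq> \<Union>(set_mset (canP K')) - rep K"
    by (simp add: T_def Union_members_minus)
  have "2 \<le> meet_count {x, y} T"
    using A B y by (intro two_le_meet_count[of A T B]) auto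
  also have "\<dots> = meet_count {x, y} (canP K')"
    using xy by (simp add: T_def meet_count_members_minus Diff_triv)
  also have "\<dots> \<le> meet_count {x, y} (snd K')"
    by (rule meet_count_canP_le)
  moreover have "fst K' \<inter> {x, y} = {}"
    using xy Union_canP_subset[of K'] by blast
  ultimately have "\<not> valid (shared_bit {x, y}) K'"
    by (simp add: valid_shared_bit_iff)
  then show ?thesis
    using that xy by blast
qed

lemma valid_shared_bit_pair:
  assumes x: "x \<notin> \<Union>(set_mset (canP K))" "x \<notin> rep K" and y: "y \<notin> rep K"
  shows "valid (shared_bit {x, y}) K"
proof (rule ccontr)
  let ?S = "{x, y}"
  assume "\<not> valid (shared_bit ?S) K"
  then have "fst K \<inter> ?S = {}" and two: "2 \<le> meet_count ?S (snd K)"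
    by (simp_all add: valid_shared_bit_iff)
  then have count_pur: "meet_count ?S (snd (pur K)) = meet_count ?S (snd K)"
    by (simp add: snd_pur meet_count_members_minus Diff_triv)
  moreover have "meet_count ?S (Psets (pur K)) = meet_count ?S (snd (pur K))"
    using x y by (simp add: Psets_eq_members_minus meet_count_members_minus Diff_triv rep_def)
  ultimately have count_Psets: "meet_count ?S (Psets (pur K)) = meet_count ?S (snd K)"
    by simp
  have size_pur: "2 \<le> size (snd (pur K))"
    using two count_pur meet_count_le_size[of ?S "snd (pur K)"] by linarith
  moreover have "2 \<le> size (Psets (pur K))"
    using two count_Psets meet_count_le_size[of ?S "Psets (pur K)"] by linarith
  ultimately have "canP K = Psets (pur K)"
    by (simp add: canP_eq)
  then have "meet_count {x} (Psets (pur K)) = 0"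
    using x by (auto simp: meet_count_eq_0_iff)
  moreover have "meet_count {y} (Psets (pur K)) = meet_count {y} (snd (pur K))"
    using y by (simp add: Psets_eq_members_minus meet_count_members_minus insert_Diff_if rep_def)
  moreover have "meet_count {y} (snd (pur K)) \<le> 1"
    using y notin_rep_pure_iff[OF size_pur] by (simp add: rep_def)
  ultimately show False
    using two count_Psets meet_count_insert_le[of x "{y}" "Psets (pur K)"] by linarith
qed

theorem mainTheorem8:
  fixes n :: nat and K K' :: cmi
  assumes "wf_cmi n K" and "wf_cmi n K'"
    and "\<not> degenerate n K" and "\<not> degenerate n K'"
    and "implies n K K'"
    and "condR K K' \<noteq> deg_cmi"
  shows "\<Union>(set_mset (canP (condR K K'))) \<subseteq> \<Union>(set_mset (canP K))"
proof
  fix x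
  assume x: "x \<in> \<Union>(set_mset (canP (condR K K')))"
  show "x \<in> \<Union>(set_mset (canP K))"
  proof (rule ccontr)
    assume "x \<notin> \<Union>(set_mset (canP K))"
    moreover obtain y where "x \<notin> rep K" "y \<notin> rep K" "\<not> valid (shared_bit {x, y}) K'"
      using condR_witness[OF assms(6) x] .
    ultimately show False
      using valid_shared_bit_pair admissible_shared_bit \<open>implies n K K'\<close>
      unfolding implies_def by blast
  qed
qed

end
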